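(* Let $(x_{1}^{(k)},\ldots,x_{n_k}^{(k)})$, $k=1,\ldots,N$, be independent samples of sizes $n_1,\ldots,n_N$ from $s$-variate populations $F_{1}(x-\theta),\ldots,F_{N}(x-\theta)$, $x,\theta\in\mathbb{R}^s$, with finite second moments. Let $t_{n_k}^{(k)}$ be the Pitman estimator (minimum covariance matrix equivariant estimator) of $\theta$ from the $k$-th sample, and let $t_{n}^{(1,\ldots,N)}$ be the Pitman estimator of $\theta$ from the pooled sample $(x_{1}^{(1)},\ldots,x_{n_N}^{(N)})$ of size $n=n_1+\ldots+n_N$. Assume the covariance matrices of all these Pitman estimators are nonsingular. Then \[ V^{-1}(t_{n}^{(1,\ldots,N)})\geq V^{-1}(t_{n_1}^{(1)})+\ldots+V^{-1}(t_{n_N}^{(N)}), \] where $V(t)$ denotes the covariance matrix of a random vector $t$ and $A\geq B$ means that $A-B$ is non-negative definite.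
   Context: Multivariate location-parameter setting: the Pitman estimator of an $s$-variate location parameter is the equivariant estimator whose covariance matrix is minimal (in the Loewner order) among covariance matrices of equivariant estimators. This is the multivariate form of the univariate superadditivity $1/\mathrm{var}(t_{n}^{(1,\ldots,N)})\geq \sum_k 1/\mathrm{var}(t_{n_k}^{(k)})$ for combining independent samples from different populations. *)

theory Defs
  imports "HOL-Probability.Probability"
begin

definition population :: "(real^'s) measure \<Rightarrow> bool" where
  "population F \<longleftrightarrow> prob_space F \<and> sets F = sets borel \<and>
     integrable F (\<lambda>x. (norm x)\<^sup>2)"

text \<open>Distribution F(x - \<theta>): the law of X + \<theta> where X has law F.\<close>
definition shifted :: "(real^'s) measure \<Rightarrow> real^'s \<Rightarrow> (real^'s) measure" where
  "shifted F \<theta> = distr F borel (\<lambda>x. x + \<theta>)"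

definition sample_law ::
  "'i set \<Rightarrow> ('i \<Rightarrow> (real^'s) measure) \<Rightarrow> real^'s \<Rightarrow> ('i \<Rightarrow> real^'s) measure" where
  "sample_law I Fs \<theta> = PiM I (\<lambda>i. shifted (Fs i) \<theta>)"

definition equivariant :: "'i set \<Rightarrow> (('i \<Rightarrow> real^'s) \<Rightarrow> real^'s) \<Rightarrow> bool" where
  "equivariant I T \<longleftrightarrow>
     T \<in> borel_measurable (PiM I (\<lambda>_. (borel :: (real^'s) measure))) \<and>
     (\<forall>x \<in> I \<rightarrow>\<^sub>E UNIV. \<forall>c. T (\<lambda>i\<in>I. x i + c) = T x + c)"

definition cov_matrix :: "'a measure \<Rightarrow> ('a \<Rightarrow> real^'s) \<Rightarrow> real^'s^'s" where
  "cov_matrix M X = (\<chi> i j. \<integral>x. (X x $ i - (\<integral>y. X y $ i \<partial>M)) *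
                               (X x $ j - (\<integral>y. X y $ j \<partial>M)) \<partial>M)"

definition admissible_est ::
  "'i set \<Rightarrow> ('i \<Rightarrow> (real^'s) measure) \<Rightarrow> (('i \<Rightarrow> real^'s) \<Rightarrow> real^'s) \<Rightarrow> bool" where
  "admissible_est I Fs T \<longleftrightarrow> equivariant I T \<and>
     (\<forall>\<theta>. integrable (sample_law I Fs \<theta>) (\<lambda>x. (norm (T x))\<^sup>2))"

definition nonneg_def :: "real^'s^'s \<Rightarrow> bool" where
  "nonneg_def A \<longleftrightarrow> (\<forall>v. 0 \<le> v \<bullet> (A *v v))"

definition loewner_le :: "real^'s^'s \<Rightarrow> real^'s^'s \<Rightarrow> bool" where
  "loewner_le A B \<longleftrightarrow> nonneg_def (B - A)"

definition pitman ::
  "'i set \<Rightarrow> ('i \<Rightarrow> (real^'s) measure) \<Rightarrow> (('i \<Rightarrow> real^'s) \<Rightarrow> real^'s) \<Rightarrow> bool" where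
  "pitman I Fs T \<longleftrightarrow> admissible_est I Fs T \<and>
     (\<forall>T' \<theta>. admissible_est I Fs T' \<longrightarrow>
        loewner_le (cov_matrix (sample_law I Fs \<theta>) T) (cov_matrix (sample_law I Fs \<theta>) T'))"

end

theory Submission
  imports Defs
begin

text \<open>Let \<open>V\<^sub>k\<close> be the covariance matrix of the \<open>k\<close>-th Pitman estimator \<open>t\<^sup>(\<^sup>k\<^sup>)\<close> and
  \<open>S = \<Sum>\<^sub>k V\<^sub>k\<inverse>\<close>. Applying each \<open>t\<^sup>(\<^sup>k\<^sup>)\<close> to its own block of the pooled sample, the
  combination \<open>S\<inverse> \<Sum>\<^sub>k V\<^sub>k\<inverse> t\<^sup>(\<^sup>k\<^sup>)\<close> is again an equivariant estimator, and since the blocks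
  are independent its covariance matrix is \<open>S\<inverse> (\<Sum>\<^sub>k V\<^sub>k\<inverse> V\<^sub>k V\<^sub>k\<inverse>) S\<inverse> = S\<inverse>\<close>. Minimality of the
  pooled Pitman estimator bounds its covariance \<open>V\<close> by \<open>S\<inverse>\<close>, and inversion reverses the
  Loewner order, giving \<open>V\<inverse> \<ge> S\<close>.\<close>

section \<open>Matrices and the Loewner order\<close>

lemma matrix_inv_mult:
  fixes A :: "real^'n^'n"
  assumes "invertible A"
  shows "A ** matrix_inv A = mat 1" "matrix_inv A ** A = mat 1"
proof -
  have "\<exists>A'. A ** A' = mat 1 \<and> A' ** A = mat 1"
    using assms unfolding invertible_def by blast
  hence "A ** matrix_inv A = mat 1 \<and> matrix_inv A ** A = mat 1"
    unfolding matrix_inv_def by (rule someI_ex)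
  thus "A ** matrix_inv A = mat 1" "matrix_inv A ** A = mat 1" by auto
qed

lemma matrix_inv_mult_vec:
  fixes A :: "real^'n^'n"
  assumes "invertible A"
  shows "A *v (matrix_inv A *v x) = x" "matrix_inv A *v (A *v x) = x"
  using matrix_inv_mult[OF assms] by (simp_all add: matrix_vector_mul_assoc)

lemma sum_matrix_vector_mult:
  fixes A :: "'k \<Rightarrow> real^'n^'m"
  shows "(\<Sum>k\<in>K. A k) *v x = (\<Sum>k\<in>K. A k *v x)"
  by (induction K rule: infinite_finite_induct) (auto simp: matrix_vector_mult_add_rdistrib)

lemma matrix_mul_sum_right:
  fixes B :: "real^'n^'m" and C :: "'k \<Rightarrow> real^'p^'n"
  shows "B ** (\<Sum>k\<in>K. C k) = (\<Sum>k\<in>K. B ** C k)"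
  by (induction K rule: infinite_finite_induct) (auto simp: matrix_add_ldistrib)

lemma symmetric_matrix_inner_commute:
  fixes A :: "real^'n^'n"
  assumes "transpose A = A"
  shows "x \<bullet> (A *v y) = y \<bullet> (A *v x)"
proof -
  have "x \<bullet> (A *v y) = (transpose A *v x) \<bullet> y" by (simp add: dot_lmul_matrix)
  thus ?thesis by (simp add: assms inner_commute)
qed

lemma quadratic_form_matrix_inv:
  fixes V :: "real^'n^'n"
  assumes "invertible V"
  shows "(x v* matrix_inv V) \<bullet> (V *v (x v* matrix_inv V)) = x \<bullet> (matrix_inv V *v x)"
proof -
  have "(x v* matrix_inv V) \<bullet> (V *v (x v* matrix_inv V))
      = x \<bullet> (matrix_inv V *v (V *v (x v* matrix_inv V)))"
    by (rule dot_lmul_matrix)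
  also have "\<dots> = (x v* matrix_inv V) \<bullet> x"
    by (simp add: matrix_inv_mult_vec[OF assms] inner_commute)
  also have "\<dots> = x \<bullet> (matrix_inv V *v x)" by (rule dot_lmul_matrix)
  finally show ?thesis .
qed

lemma nonneg_def_matrix_inv:
  fixes V :: "real^'n^'n"
  assumes "nonneg_def V" "invertible V"
  shows "nonneg_def (matrix_inv V)"
  unfolding nonneg_def_def
proof
  fix x :: "real^'n"
  have "0 \<le> (x v* matrix_inv V) \<bullet> (V *v (x v* matrix_inv V))"
    using assms(1) unfolding nonneg_def_def ..
  thus "0 \<le> x \<bullet> (matrix_inv V *v x)" by (simp only: quadratic_form_matrix_inv[OF assms(2)])
qed

lemma nonneg_def_kernel:
  fixes P :: "real^'n^'n"
  assumes sym: "transpose P = P" and psd: "nonneg_def P" and z: "z \<bullet> (P *v z) = 0"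
  shows "P *v z = 0"
proof (rule ccontr)
  assume nz: "P *v z \<noteq> 0"
  define a where "a = P *v z"
  define b where "b = a \<bullet> (P *v a)"
  have a0: "a \<bullet> a > 0" using nz a_def by simp
  have b0: "b \<ge> 0" using psd b_def unfolding nonneg_def_def by simp
  have za: "z \<bullet> (P *v a) = a \<bullet> a"
    using symmetric_matrix_inner_commute[OF sym] unfolding a_def by metis
  define t where "t = (a \<bullet> a) / (b + 1)"
  have t0: "t > 0" using a0 b0 t_def by simp
  text \<open>Moving from \<open>z\<close> a small step \<open>t\<close> against \<open>P z\<close> makes the form negative.\<close>
  have "(z - t *\<^sub>R a) \<bullet> (P *v (z - t *\<^sub>R a))
      = z \<bullet> (P *v z) - t * (z \<bullet> (P *v a)) - t * (a \<bullet> (P *v z)) + t * t * (a \<bullet> (P *v a))"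
    by (simp add: matrix_vector_mult_diff_distrib matrix_vector_mult_scaleR
        inner_diff_left inner_diff_right algebra_simps)
  also have "\<dots> = t * (t * b - 2 * (a \<bullet> a))" using z za a_def b_def by (simp add: algebra_simps)
  finally have eq: "(z - t *\<^sub>R a) \<bullet> (P *v (z - t *\<^sub>R a)) = t * (t * b - 2 * (a \<bullet> a))" .
  have "t * b = (a \<bullet> a) * (b / (b + 1))" using t_def b0 by (simp add: field_simps)
  also have "\<dots> < (a \<bullet> a) * 1" using a0 b0 by (intro mult_strict_left_mono) auto
  finally have "t * b - 2 * (a \<bullet> a) < 0" using a0 by linarith
  hence "t * (t * b - 2 * (a \<bullet> a)) < 0" using t0 by (simp add: mult_pos_neg)
  with eq psd show False unfolding nonneg_def_def by (metis not_le)
qed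

lemma invertible_sum_matrix_inv:
  fixes V :: "'k \<Rightarrow> real^'n^'n"
  assumes "finite K" "i \<in> K"
    and sym: "\<And>k. k \<in> K \<Longrightarrow> transpose (V k) = V k"
    and psd: "\<And>k. k \<in> K \<Longrightarrow> nonneg_def (V k)"
    and inv: "\<And>k. k \<in> K \<Longrightarrow> invertible (V k)"
  shows "invertible (\<Sum>k\<in>K. matrix_inv (V k))"
proof -
  let ?S = "\<Sum>k\<in>K. matrix_inv (V k)"
  have kernel: "x = 0" if Sx: "?S *v x = 0" for x
  proof -
    let ?W = "matrix_inv (V i)"
    have nn: "0 \<le> x \<bullet> (matrix_inv (V k) *v x)" if "k \<in> K" for k
      using nonneg_def_matrix_inv[OF psd inv, OF that that] unfolding nonneg_def_def ..
    have "(\<Sum>k\<in>K. x \<bullet> (matrix_inv (V k) *v x)) = x \<bullet> (?S *v x)"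
      unfolding sum_matrix_vector_mult inner_sum_right ..
    also have "\<dots> = 0" using Sx by simp
    finally have "\<forall>k\<in>K. x \<bullet> (matrix_inv (V k) *v x) = 0"
      using sum_nonneg_eq_0_iff[OF \<open>finite K\<close>, of "\<lambda>k. x \<bullet> (matrix_inv (V k) *v x)"] nn
      by blast
    hence "x \<bullet> (?W *v x) = 0" using \<open>i \<in> K\<close> by blast
    hence "(x v* ?W) \<bullet> (V i *v (x v* ?W)) = 0"
      using quadratic_form_matrix_inv[OF inv[OF \<open>i \<in> K\<close>], of x] by simp
    hence "V i *v (x v* ?W) = 0"
      by (rule nonneg_def_kernel[OF sym psd, OF \<open>i \<in> K\<close> \<open>i \<in> K\<close>])
    hence "x v* ?W = 0"
      using matrix_inv_mult_vec(2)[OF inv[OF \<open>i \<in> K\<close>], of "x v* ?W"] by simp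
    hence "(x v* ?W) v* V i = 0" by simp
    thus "x = 0"
      by (simp add: vector_matrix_mul_assoc matrix_inv_mult[OF inv[OF \<open>i \<in> K\<close>]])
  qed
  have "inj ((*v) ?S)"
  proof (rule injI)
    fix a b assume "?S *v a = ?S *v b"
    hence "?S *v (a - b) = 0" by (simp add: matrix_vector_mult_diff_distrib)
    thus "a = b" using kernel by fastforce
  qed
  thus ?thesis using matrix_left_invertible_injective invertible_left_inverse by blast
qed

text \<open>The hypothesis says \<open>S\<^sup>T V S \<le> S\<close>; expanding the non-negative form of \<open>V\<close> at
  \<open>S\<^sup>T x - V\<inverse> x\<close> turns it into \<open>S \<le> V\<inverse>\<close>.\<close>
lemma loewner_le_matrix_inv:
  fixes V S :: "real^'n^'n"
  assumes sym: "transpose V = V" and psd: "nonneg_def V" and inv: "invertible V"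
    and le: "\<And>x. (x v* S) \<bullet> (V *v (x v* S)) \<le> x \<bullet> (S *v x)"
  shows "loewner_le S (matrix_inv V)"
  unfolding loewner_le_def nonneg_def_def
proof
  fix x :: "real^'n"
  define y where "y = x v* S"
  define z where "z = matrix_inv V *v x"
  have Vz: "V *v z = x" unfolding z_def by (rule matrix_inv_mult_vec(1)[OF inv])
  have yz: "y \<bullet> (V *v z) = x \<bullet> (S *v x)" unfolding Vz y_def by (rule dot_lmul_matrix)
  have zy: "z \<bullet> (V *v y) = y \<bullet> (V *v z)" by (rule symmetric_matrix_inner_commute[OF sym])
  have zz: "z \<bullet> (V *v z) = x \<bullet> (matrix_inv V *v x)" by (simp only: Vz) (simp add: z_def inner_commute)
  have "0 \<le> (y - z) \<bullet> (V *v (y - z))" using psd unfolding nonneg_def_def by blast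
  also have "\<dots> = y \<bullet> (V *v y) - y \<bullet> (V *v z) - z \<bullet> (V *v y) + z \<bullet> (V *v z)"
    by (simp add: matrix_vector_mult_diff_distrib inner_diff_left inner_diff_right)
  also have "\<dots> = y \<bullet> (V *v y) - 2 * (x \<bullet> (S *v x)) + x \<bullet> (matrix_inv V *v x)"
    unfolding zy yz zz by simp
  finally show "0 \<le> x \<bullet> ((matrix_inv V - S) *v x)"
    using le[of x] unfolding y_def
    by (simp add: matrix_vector_mult_diff_rdistrib inner_diff_right)
qed

section \<open>Square-integrable functions\<close>

definition square_integrable :: "'a measure \<Rightarrow> ('a \<Rightarrow> 'b::real_normed_vector) \<Rightarrow> bool" where
  "square_integrable M f \<longleftrightarrow> f \<in> borel_measurable M \<and> integrable M (\<lambda>x. (norm (f x))\<^sup>2)"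

lemma borel_measurable_bounded_linear_comp:
  assumes "bounded_linear h" "g \<in> borel_measurable M"
  shows "(\<lambda>x. h (g x)) \<in> borel_measurable M"
  by (rule borel_measurable_continuous_on[OF linear_continuous_on[OF assms(1)] assms(2)])

lemma square_integrable_bound:
  fixes f :: "'a \<Rightarrow> 'b::real_normed_vector" and g :: "'a \<Rightarrow> 'c::real_normed_vector"
  assumes f: "square_integrable M f" and g: "g \<in> borel_measurable M"
    and bound: "\<And>x. x \<in> space M \<Longrightarrow> norm (g x) \<le> K * norm (f x)"
  shows "square_integrable M g"
  unfolding square_integrable_def
proof
  show "g \<in> borel_measurable M" by fact
  have i: "integrable M (\<lambda>x. K\<^sup>2 * (norm (f x))\<^sup>2)"
    using f unfolding square_integrable_def by simp
  show "integrable M (\<lambda>x. (norm (g x))\<^sup>2)"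
  proof (rule Bochner_Integration.integrable_bound[OF i])
    show "(\<lambda>x. (norm (g x))\<^sup>2) \<in> borel_measurable M" using g by measurable
    show "AE x in M. norm ((norm (g x))\<^sup>2) \<le> norm (K\<^sup>2 * (norm (f x))\<^sup>2)"
    proof (rule AE_I2)
      fix x assume x: "x \<in> space M"
      have "norm (g x) \<le> \<bar>K\<bar> * norm (f x)"
        using bound[OF x] by (meson abs_ge_self dual_order.trans mult_right_mono norm_ge_zero)
      hence "(norm (g x))\<^sup>2 \<le> (\<bar>K\<bar> * norm (f x))\<^sup>2" by (intro power_mono) auto
      thus "norm ((norm (g x))\<^sup>2) \<le> norm (K\<^sup>2 * (norm (f x))\<^sup>2)"
        by (simp add: power_mult_distrib)
    qed
  qed
qed

lemma square_integrable_add: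
  fixes f g :: "'a \<Rightarrow> 'b::{real_normed_vector, second_countable_topology}"
  assumes "square_integrable M f" "square_integrable M g"
  shows "square_integrable M (\<lambda>x. f x + g x)"
  unfolding square_integrable_def
proof
  show m: "(\<lambda>x. f x + g x) \<in> borel_measurable M"
    using assms unfolding square_integrable_def by auto
  have i: "integrable M (\<lambda>x. 2 * (norm (f x))\<^sup>2 + 2 * (norm (g x))\<^sup>2)"
    using assms unfolding square_integrable_def by auto
  show "integrable M (\<lambda>x. (norm (f x + g x))\<^sup>2)"
  proof (rule Bochner_Integration.integrable_bound[OF i])
    show "(\<lambda>x. (norm (f x + g x))\<^sup>2) \<in> borel_measurable M" using m by measurable
    show "AE x in M. norm ((norm (f x + g x))\<^sup>2) \<le> norm (2 * (norm (f x))\<^sup>2 + 2 * (norm (g x))\<^sup>2)"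
    proof (rule AE_I2)
      fix x
      have "(norm (f x + g x))\<^sup>2 \<le> (norm (f x) + norm (g x))\<^sup>2"
        by (intro power_mono norm_triangle_ineq) auto
      also have "\<dots> \<le> 2 * (norm (f x))\<^sup>2 + 2 * (norm (g x))\<^sup>2"
        using zero_le_power2[of "norm (f x) - norm (g x)"]
        by (simp only: power2_diff power2_sum; linarith?)
      finally show "norm ((norm (f x + g x))\<^sup>2) \<le> norm (2 * (norm (f x))\<^sup>2 + 2 * (norm (g x))\<^sup>2)"
        by simp
    qed
  qed
qed

lemma square_integrable_zero: "square_integrable M (\<lambda>x. 0)"
  unfolding square_integrable_def by simp

lemma square_integrable_sum:
  fixes f :: "'i \<Rightarrow> 'a \<Rightarrow> 'b::{real_normed_vector, second_countable_topology}"
  assumes "\<And>k. k \<in> K \<Longrightarrow> square_integrable M (f k)"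
  shows "square_integrable M (\<lambda>x. \<Sum>k\<in>K. f k x)"
  using assms
  by (induction K rule: infinite_finite_induct) (simp_all add: square_integrable_zero square_integrable_add)

lemma square_integrable_const:
  assumes "finite_measure M"
  shows "square_integrable M (\<lambda>x. c)"
  unfolding square_integrable_def using assms by (simp add: finite_measure.integrable_const)

lemma square_integrable_diff_const:
  fixes f :: "'a \<Rightarrow> 'b::{real_normed_vector, second_countable_topology}"
  assumes "finite_measure M" "square_integrable M f"
  shows "square_integrable M (\<lambda>x. f x - c)"
  using square_integrable_add[OF assms(2) square_integrable_const[OF assms(1), of "-c"]] by simp

lemma square_integrable_integrable:
  fixes f :: "'a \<Rightarrow> real"
  assumes "finite_measure M" "square_integrable M f"
  shows "integrable M f"
  using finite_measure.square_integrable_imp_integrable[OF assms(1), of f] assms(2)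
  unfolding square_integrable_def by simp

lemma square_integrable_mult_integrable:
  fixes f g :: "'a \<Rightarrow> real"
  assumes "square_integrable M f" "square_integrable M g"
  shows "integrable M (\<lambda>x. f x * g x)"
proof -
  have i: "integrable M (\<lambda>x. (f x)\<^sup>2 + (g x)\<^sup>2)"
    using assms unfolding square_integrable_def by auto
  show ?thesis
  proof (rule Bochner_Integration.integrable_bound[OF i])
    show "(\<lambda>x. f x * g x) \<in> borel_measurable M" using assms unfolding square_integrable_def by auto
    show "AE x in M. norm (f x * g x) \<le> norm ((f x)\<^sup>2 + (g x)\<^sup>2)"
    proof (rule AE_I2)
      fix x
      have "\<bar>f x\<bar> * \<bar>g x\<bar> \<le> (f x)\<^sup>2 + (g x)\<^sup>2"
        using zero_le_power2[of "\<bar>f x\<bar> - \<bar>g x\<bar>"] zero_le_power2[of "f x"] zero_le_power2[of "g x"]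
        by (simp only: power2_diff power2_abs; linarith?)
      thus "norm (f x * g x) \<le> norm ((f x)\<^sup>2 + (g x)\<^sup>2)" by (simp add: abs_mult)
    qed
  qed
qed

lemma square_integrable_component:
  fixes f :: "'a \<Rightarrow> real^'n"
  assumes "square_integrable M f"
  shows "square_integrable M (\<lambda>x. f x $ i)"
  by (rule square_integrable_bound[OF assms, where K=1])
    (use assms in \<open>auto simp: square_integrable_def component_le_norm_cart
      intro!: borel_measurable_bounded_linear_comp[where h="\<lambda>v. v $ i"]\<close>)

lemma square_integrable_inner:
  fixes f :: "'a \<Rightarrow> 'b::{real_inner, second_countable_topology}"
  assumes "square_integrable M f"
  shows "square_integrable M (\<lambda>x. u \<bullet> f x)"
  by (rule square_integrable_bound[OF assms, where K="norm u"])
    (use assms in \<open>auto simp: square_integrable_def Cauchy_Schwarz_ineq2 intro!: borel_measurable_inner\<close>)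

lemma square_integrable_matrix_vector_mult:
  fixes f :: "'a \<Rightarrow> real^'n"
  assumes "square_integrable M f"
  shows "square_integrable M (\<lambda>x. A *v f x)"
proof -
  obtain K where K: "\<And>x. norm (A *v x) \<le> norm x * K"
    using bounded_linear.bounded[OF matrix_vector_mul_bounded_linear[of A]] by blast
  show ?thesis
    by (rule square_integrable_bound[OF assms, where K=K])
      (use assms K in \<open>auto simp: square_integrable_def mult.commute
        intro!: borel_measurable_bounded_linear_comp[where h="(*v) A"]\<close>)
qed

lemma square_integrable_distr:
  fixes g :: "'b \<Rightarrow> 'c::real_normed_vector"
  assumes f: "f \<in> measurable M N" and g: "square_integrable (distr M N f) g"
  shows "square_integrable M (\<lambda>x. g (f x))"
proof -
  have gm: "g \<in> borel_measurable N" using g unfolding square_integrable_def by simp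
  have "(\<lambda>x. (norm (g x))\<^sup>2) \<in> borel_measurable N" using gm by measurable
  from integrable_distr_eq[OF f this] have "integrable M (\<lambda>x. (norm (g (f x)))\<^sup>2)"
    using g unfolding square_integrable_def by simp
  moreover have "(\<lambda>x. g (f x)) \<in> borel_measurable M" using f gm by (rule measurable_compose)
  ultimately show ?thesis unfolding square_integrable_def by simp
qed

section \<open>Covariance matrices\<close>

lemma cov_matrix_transpose: "transpose (cov_matrix M X) = cov_matrix M X"
  by (simp add: transpose_def cov_matrix_def vec_eq_iff mult.commute)

lemma (in prob_space) cov_matrix_quadratic_form:
  fixes X :: "'a \<Rightarrow> real^'n"
  assumes X: "square_integrable M X"
  shows "w \<bullet> (cov_matrix M X *v w) = variance (\<lambda>x. w \<bullet> X x)"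
proof -
  define c where "c i x = X x $ i - expectation (\<lambda>y. X y $ i)" for i x
  have c: "square_integrable M (c i)" for i
    unfolding c_def
    by (rule square_integrable_diff_const[OF finite_measure_axioms square_integrable_component[OF X]])
  have int_cc: "integrable M (\<lambda>x. (w $ i * c i x) * (w $ j * c j x))" for i j
  proof -
    have "integrable M (\<lambda>x. (w $ i * w $ j) * (c i x * c j x))"
      using square_integrable_mult_integrable[OF c c] by simp
    thus ?thesis by (simp add: algebra_simps)
  qed
  have int_X: "integrable M (\<lambda>x. X x $ i)" for i
    by (rule square_integrable_integrable[OF finite_measure_axioms square_integrable_component[OF X]])
  have centered: "(\<Sum>i\<in>UNIV. w $ i * c i x) = w \<bullet> X x - expectation (\<lambda>y. w \<bullet> X y)" for x
  proof -
    have "expectation (\<lambda>y. w \<bullet> X y) = (\<Sum>i\<in>UNIV. w $ i * expectation (\<lambda>y. X y $ i))"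
      unfolding inner_vec_def by (subst Bochner_Integration.integral_sum) (auto intro: int_X)
    thus ?thesis unfolding c_def by (simp add: inner_vec_def right_diff_distrib sum_subtractf)
  qed
  have "w \<bullet> (cov_matrix M X *v w)
      = (\<Sum>i\<in>UNIV. \<Sum>j\<in>UNIV. w $ i * (\<integral>x. c i x * c j x \<partial>M) * w $ j)"
    by (simp add: inner_vec_def matrix_vector_mult_def cov_matrix_def c_def sum_distrib_left mult.assoc)
  also have "\<dots> = (\<Sum>i\<in>UNIV. \<Sum>j\<in>UNIV. (\<integral>x. (w $ i * c i x) * (w $ j * c j x) \<partial>M))"
    by (simp add: algebra_simps)
  also have "\<dots> = (\<integral>x. (\<Sum>i\<in>UNIV. \<Sum>j\<in>UNIV. (w $ i * c i x) * (w $ j * c j x)) \<partial>M)"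
    by (simp add: Bochner_Integration.integral_sum integrable_sum int_cc)
  also have "\<dots> = (\<integral>x. (\<Sum>i\<in>UNIV. w $ i * c i x)\<^sup>2 \<partial>M)"
    by (simp add: power2_eq_square sum_product)
  finally show ?thesis unfolding centered .
qed

lemma (in prob_space) nonneg_def_cov_matrix:
  fixes X :: "'a \<Rightarrow> real^'n"
  assumes "square_integrable M X"
  shows "nonneg_def (cov_matrix M X)"
  unfolding nonneg_def_def cov_matrix_quadratic_form[OF assms] by (simp add: variance_positive)

lemma (in prob_space) variance_sum_indep:
  fixes Y :: "'i \<Rightarrow> 'a \<Rightarrow> real"
  assumes "finite K" and Y: "\<And>k. k \<in> K \<Longrightarrow> square_integrable M (Y k)"
    and indep: "\<And>j k. j \<in> K \<Longrightarrow> k \<in> K \<Longrightarrow> j \<noteq> k \<Longrightarrow> indep_var borel (Y j) borel (Y k)"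
  shows "variance (\<lambda>x. \<Sum>k\<in>K. Y k x) = (\<Sum>k\<in>K. variance (Y k))"
proof -
  define Z where "Z k x = Y k x - expectation (Y k)" for k x
  have int_Y: "k \<in> K \<Longrightarrow> integrable M (Y k)" for k
    using square_integrable_integrable[OF finite_measure_axioms Y] .
  have Z: "k \<in> K \<Longrightarrow> square_integrable M (Z k)" for k
    unfolding Z_def by (rule square_integrable_diff_const[OF finite_measure_axioms Y])
  have int_Z: "k \<in> K \<Longrightarrow> integrable M (Z k)" for k
    using square_integrable_integrable[OF finite_measure_axioms Z] .
  have EZ: "k \<in> K \<Longrightarrow> expectation (Z k) = 0" for k
    unfolding Z_def using int_Y by (simp add: prob_space)
  have cross: "expectation (\<lambda>x. Z j x * Z k x) = (if j = k then expectation (\<lambda>x. (Z k x)\<^sup>2) else 0)"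
    if "j \<in> K" "k \<in> K" for j k
  proof (cases "j = k")
    case True then show ?thesis by (simp add: power2_eq_square)
  next
    case False
    have "indep_var borel (Z j) borel (Z k)"
      using indep_var_compose[OF indep[OF that False], of "\<lambda>t. t - expectation (Y j)" borel
          "\<lambda>t. t - expectation (Y k)" borel]
      by (simp add: comp_def Z_def[abs_def])
    hence "expectation (\<lambda>x. Z j x * Z k x) = expectation (Z j) * expectation (Z k)"
      using int_Z that by (intro indep_var_lebesgue_integral) auto
    thus ?thesis using EZ that False by simp
  qed
  have int_ZZ: "j \<in> K \<Longrightarrow> k \<in> K \<Longrightarrow> integrable M (\<lambda>x. Z j x * Z k x)" for j k
    using square_integrable_mult_integrable[OF Z Z] by blast
  have centered: "(\<Sum>k\<in>K. Y k x) - expectation (\<lambda>y. \<Sum>k\<in>K. Y k y) = (\<Sum>k\<in>K. Z k x)" for x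
    unfolding Z_def using int_Y by (simp add: Bochner_Integration.integral_sum sum_subtractf)
  have "variance (\<lambda>x. \<Sum>k\<in>K. Y k x) = expectation (\<lambda>x. \<Sum>j\<in>K. \<Sum>k\<in>K. Z j x * Z k x)"
    unfolding centered by (simp add: power2_eq_square sum_product)
  also have "\<dots> = (\<Sum>j\<in>K. \<Sum>k\<in>K. expectation (\<lambda>x. Z j x * Z k x))"
    using int_ZZ by (simp add: Bochner_Integration.integral_sum integrable_sum)
  also have "\<dots> = (\<Sum>j\<in>K. \<Sum>k\<in>K. (if j = k then expectation (\<lambda>x. (Z k x)\<^sup>2) else 0))"
    by (intro sum.cong refl cross) auto
  also have "\<dots> = (\<Sum>k\<in>K. expectation (\<lambda>x. (Z k x)\<^sup>2))"
    using \<open>finite K\<close> by (simp add: if_distrib sum.delta cong: if_cong)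
  finally show ?thesis unfolding Z_def .
qed

lemma variance_distr:
  fixes g :: "'b \<Rightarrow> real"
  assumes f: "f \<in> measurable M N" and g: "g \<in> borel_measurable N"
  shows "(\<integral>x. (g (f x) - (\<integral>y. g (f y) \<partial>M))\<^sup>2 \<partial>M)
       = (\<integral>z. (g z - (\<integral>y. g y \<partial>distr M N f))\<^sup>2 \<partial>distr M N f)"
proof -
  have "(\<integral>z. (g z - c)\<^sup>2 \<partial>distr M N f) = (\<integral>x. (g (f x) - c)\<^sup>2 \<partial>M)" for c
    by (rule integral_distr[OF f]) (use g in measurable)
  thus ?thesis by (simp add: integral_distr[OF f g])
qed

section \<open>Sample laws and their blocks\<close>

lemma indep_vars_PiM_coordinates:
  assumes "I \<noteq> {}" and M: "\<And>i. i \<in> I \<Longrightarrow> prob_space (M i)"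
  shows "prob_space.indep_vars (PiM I M) M (\<lambda>i \<omega>. \<omega> i) I"
proof -
  interpret prob_space "PiM I M" by (rule prob_space_PiM[OF M])
  show ?thesis
  proof (subst indep_vars_iff_distr_eq_PiM'[OF \<open>I \<noteq> {}\<close>])
    show "random_variable (M i) (\<lambda>\<omega>. \<omega> i)" if "i \<in> I" for i
      using that by (rule measurable_component_singleton)
    have "distr (PiM I M) (PiM I (\<lambda>i. M (id i))) (\<lambda>\<omega>. \<lambda>i\<in>I. \<omega> (id i)) = PiM I (\<lambda>i. M (id i))"
      by (intro distr_PiM_reindex M) auto
    hence "distr (PiM I M) (PiM I M) (\<lambda>\<omega>. \<lambda>i\<in>I. \<omega> i) = PiM I M" by simp
    also have "\<dots> = PiM I (\<lambda>i. distr (PiM I M) (M i) (\<lambda>\<omega>. \<omega> i))"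
      by (intro PiM_cong refl distr_PiM_component[symmetric] M) auto
    finally show "distr (PiM I M) (PiM I M) (\<lambda>\<omega>. \<lambda>i\<in>I. \<omega> i)
        = PiM I (\<lambda>i. distr (PiM I M) (M i) (\<lambda>\<omega>. \<omega> i))" .
  qed
qed

lemma sets_shifted: "sets (shifted F \<theta>) = sets borel"
  by (simp add: shifted_def)

lemma prob_space_shifted:
  assumes "population F"
  shows "prob_space (shifted F \<theta>)"
proof -
  have F: "prob_space F" and sets_F: "sets F = sets borel"
    using assms by (auto simp: population_def)
  have "(\<lambda>x. x + \<theta>) \<in> measurable F borel"
    by (subst measurable_cong_sets[OF sets_F refl]) (intro borel_measurable_continuous_onI continuous_intros)
  thus ?thesis unfolding shifted_def by (rule prob_space.prob_space_distr[OF F])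
qed

lemma sets_sample_law: "sets (sample_law I Fs \<theta>) = sets (PiM I (\<lambda>_. borel))"
  unfolding sample_law_def by (intro sets_PiM_cong) (auto simp: sets_shifted)

lemma prob_space_sample_law:
  assumes "\<And>i. i \<in> I \<Longrightarrow> population (Fs i)"
  shows "prob_space (sample_law I Fs \<theta>)"
  unfolding sample_law_def by (intro prob_space_PiM prob_space_shifted assms)

lemma admissible_est_square_integrable:
  assumes "admissible_est I Fs T"
  shows "square_integrable (sample_law I Fs \<theta>) T"
proof -
  have "T \<in> borel_measurable (sample_law I Fs \<theta>)"
    using assms unfolding measurable_cong_sets[OF sets_sample_law refl]
    by (simp add: admissible_est_def equivariant_def)
  thus ?thesis using assms unfolding square_integrable_def admissible_est_def by simp
qed

text \<open>The pooled sample is indexed by pairs \<open>(k, i)\<close>; \<open>block m k\<close> extracts the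
  \<open>k\<close>-th sample \<open>(x\<^sub>0\<^sup>(\<^sup>k\<^sup>), \<dots>, x\<^sub>m\<^sub>-\<^sub>1\<^sup>(\<^sup>k\<^sup>))\<close>.\<close>
definition block :: "nat \<Rightarrow> 'k \<Rightarrow> ('k \<times> nat \<Rightarrow> 'a) \<Rightarrow> nat \<Rightarrow> 'a" where
  "block m k \<omega> = (\<lambda>i\<in>{..<m}. \<omega> (k, i))"

lemma measurable_block:
  assumes "sets M = sets (PiM I (\<lambda>_. borel))" "{k} \<times> {..<m} \<subseteq> I"
  shows "block m k \<in> measurable M (PiM {..<m} (\<lambda>_. borel))"
  unfolding block_def measurable_cong_sets[OF assms(1) refl]
proof (rule measurable_restrict)
  fix i assume "i \<in> {..<m}"
  thus "(\<lambda>\<omega>. \<omega> (k, i)) \<in> measurable (PiM I (\<lambda>_. borel)) borel"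
    using assms(2) by (intro measurable_component_singleton) auto
qed

lemma distr_sample_law_block:
  assumes pop: "\<And>j. j \<in> I \<Longrightarrow> population (Fs j)" and "{k} \<times> {..<m} \<subseteq> I"
  shows "distr (sample_law I Fs \<theta>) (PiM {..<m} (\<lambda>_. borel)) (block m k)
       = sample_law {..<m} (\<lambda>i. Fs (k, i)) \<theta>"
proof -
  let ?M = "\<lambda>j. shifted (Fs j) \<theta>"
  have "distr (PiM I ?M) (PiM {..<m} (\<lambda>i. ?M (k, i))) (\<lambda>\<omega>. \<lambda>i\<in>{..<m}. \<omega> (k, i))
      = PiM {..<m} (\<lambda>i. ?M (k, i))"
    using assms by (intro distr_PiM_reindex prob_space_shifted pop) (auto simp: inj_on_def)
  moreover have "distr (PiM I ?M) (PiM {..<m} (\<lambda>i. ?M (k, i))) (\<lambda>\<omega>. \<lambda>i\<in>{..<m}. \<omega> (k, i))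
      = distr (sample_law I Fs \<theta>) (PiM {..<m} (\<lambda>_. borel)) (block m k)"
    unfolding sample_law_def block_def by (intro distr_cong refl sets_PiM_cong) (simp add: sets_shifted)
  ultimately show ?thesis unfolding sample_law_def by simp
qed

lemma indep_var_sample_law_blocks:
  assumes "I \<noteq> {}" and pop: "\<And>j. j \<in> I \<Longrightarrow> population (Fs j)"
    and blocks: "{j} \<times> {..<mj} \<subseteq> I" "{k} \<times> {..<mk} \<subseteq> I" "j \<noteq> k"
    and gj: "gj \<in> borel_measurable (PiM {..<mj} (\<lambda>_. borel))"
    and gk: "gk \<in> borel_measurable (PiM {..<mk} (\<lambda>_. borel))"
  shows "prob_space.indep_var (sample_law I Fs \<theta>)
           borel (\<lambda>\<omega>. gj (block mj j \<omega>)) borel (\<lambda>\<omega>. gk (block mk k \<omega>))"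
proof -
  let ?M = "\<lambda>j. shifted (Fs j) \<theta>" and ?A = "{j} \<times> {..<mj}" and ?B = "{k} \<times> {..<mk}"
  interpret prob_space "sample_law I Fs \<theta>" by (rule prob_space_sample_law[OF pop])
  have "indep_vars ?M (\<lambda>i \<omega>. \<omega> i) I"
    unfolding sample_law_def by (intro indep_vars_PiM_coordinates \<open>I \<noteq> {}\<close> prob_space_shifted pop)
  hence "indep_var (PiM ?A ?M) (\<lambda>\<omega>. restrict \<omega> ?A) (PiM ?B ?M) (\<lambda>\<omega>. restrict \<omega> ?B)"
    using blocks by (intro indep_var_restrict[where X="\<lambda>i \<omega>. \<omega> i", simplified]) auto
  moreover have "block m l \<in> measurable (PiM ({l} \<times> {..<m}) ?M) (PiM {..<m} (\<lambda>_. borel))" for m l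
    by (rule measurable_block[where I="{l} \<times> {..<m}"]) (auto intro!: sets_PiM_cong simp: sets_shifted)
  ultimately have "indep_var borel ((\<lambda>r. gj (block mj j r)) \<circ> (\<lambda>\<omega>. restrict \<omega> ?A))
                             borel ((\<lambda>r. gk (block mk k r)) \<circ> (\<lambda>\<omega>. restrict \<omega> ?B))"
    by (intro indep_var_compose measurable_compose[OF _ gj] measurable_compose[OF _ gk])
  moreover have "(\<lambda>r. gj (block mj j r)) \<circ> (\<lambda>\<omega>. restrict \<omega> ?A) = (\<lambda>\<omega>. gj (block mj j \<omega>))"
    by (auto simp: block_def fun_eq_iff intro!: arg_cong[where f=gj])
  moreover have "(\<lambda>r. gk (block mk k r)) \<circ> (\<lambda>\<omega>. restrict \<omega> ?B) = (\<lambda>\<omega>. gk (block mk k \<omega>))"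
    by (auto simp: block_def fun_eq_iff intro!: arg_cong[where f=gk])
  ultimately show ?thesis by simp
qed

section \<open>Combining estimators of independent samples\<close>

definition combined_estimator ::
  "nat \<Rightarrow> (nat \<Rightarrow> nat) \<Rightarrow> (nat \<Rightarrow> real^'s^'s) \<Rightarrow> (nat \<Rightarrow> (nat \<Rightarrow> real^'s) \<Rightarrow> real^'s)
     \<Rightarrow> (nat \<times> nat \<Rightarrow> real^'s) \<Rightarrow> real^'s" where
  "combined_estimator N n A T \<omega> = (\<Sum>k<N. A k *v T k (block (n k) k \<omega>))"

lemma equivariant_combined_estimator:
  assumes T: "\<forall>k<N. equivariant {..<n k} (T k)" and A: "(\<Sum>k<N. A k) = mat 1"
  shows "equivariant (SIGMA k:{..<N}. {..<n k}) (combined_estimator N n A T)"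
proof -
  let ?I = "SIGMA k:{..<N}. {..<n k}"
  have "(\<lambda>\<omega>. A k *v T k (block (n k) k \<omega>)) \<in> borel_measurable (PiM ?I (\<lambda>_. borel))"
    if "k < N" for k
    using that T unfolding equivariant_def
    by (intro borel_measurable_bounded_linear_comp[OF matrix_vector_mul_bounded_linear]
        measurable_compose[OF measurable_block]) auto
  hence "combined_estimator N n A T \<in> borel_measurable (PiM ?I (\<lambda>_. borel))"
    unfolding combined_estimator_def[abs_def] by (intro borel_measurable_sum) auto
  moreover have "combined_estimator N n A T (\<lambda>j\<in>?I. x j + c) = combined_estimator N n A T x + c"
    for x c
  proof -
    have "T k (block (n k) k (\<lambda>j\<in>?I. x j + c)) = T k (block (n k) k x) + c" if "k < N" for k
    proof -
      have shift: "block (n k) k (\<lambda>j\<in>?I. x j + c) = (\<lambda>i\<in>{..<n k}. block (n k) k x i + c)"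
        using that by (auto simp: block_def fun_eq_iff)
      have "block (n k) k x \<in> {..<n k} \<rightarrow>\<^sub>E UNIV" by (simp add: block_def)
      hence "T k (\<lambda>i\<in>{..<n k}. block (n k) k x i + c) = T k (block (n k) k x) + c"
        using T that unfolding equivariant_def by blast
      thus ?thesis by (simp only: shift)
    qed
    hence "combined_estimator N n A T (\<lambda>j\<in>?I. x j + c)
        = (\<Sum>k<N. A k *v T k (block (n k) k x)) + (\<Sum>k<N. A k) *v c"
      unfolding combined_estimator_def sum_matrix_vector_mult
      by (simp add: matrix_vector_right_distrib sum.distrib)
    thus ?thesis unfolding A combined_estimator_def by simp
  qed
  ultimately show ?thesis unfolding equivariant_def by blast
qed

lemma square_integrable_block_estimator:
  assumes pop: "\<And>j. j \<in> I \<Longrightarrow> population (Fs j)" and "{k} \<times> {..<m} \<subseteq> I"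
    and T: "admissible_est {..<m} (\<lambda>i. Fs (k, i)) T"
  shows "square_integrable (sample_law I Fs \<theta>) (\<lambda>\<omega>. T (block m k \<omega>))"
proof (rule square_integrable_distr[where f="block m k"])
  show "block m k \<in> measurable (sample_law I Fs \<theta>) (PiM {..<m} (\<lambda>_. borel))"
    by (rule measurable_block[OF sets_sample_law \<open>{k} \<times> {..<m} \<subseteq> I\<close>])
  show "square_integrable (distr (sample_law I Fs \<theta>) (PiM {..<m} (\<lambda>_. borel)) (block m k)) T"
    using admissible_est_square_integrable[OF T] by (simp add: distr_sample_law_block[OF assms(1,2)])
qed

lemma admissible_combined_estimator:
  assumes pop: "\<forall>k<N. population (F k)"
    and T: "\<forall>k<N. admissible_est {..<n k} (\<lambda>_. F k) (T k)" and A: "(\<Sum>k<N. A k) = mat 1"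
  shows "admissible_est (SIGMA k:{..<N}. {..<n k}) (\<lambda>(k, i). F k) (combined_estimator N n A T)"
proof -
  have "square_integrable (sample_law (SIGMA k:{..<N}. {..<n k}) (\<lambda>(k, i). F k) \<theta>)
          (combined_estimator N n A T)" for \<theta>
    unfolding combined_estimator_def[abs_def] using pop T
    by (intro square_integrable_sum square_integrable_matrix_vector_mult
        square_integrable_block_estimator) auto
  moreover have "equivariant (SIGMA k:{..<N}. {..<n k}) (combined_estimator N n A T)"
    using T A by (intro equivariant_combined_estimator) (auto simp: admissible_est_def)
  ultimately show ?thesis unfolding admissible_est_def square_integrable_def by blast
qed

text \<open>The blocks of the pooled sample are independent, so the variance of every linear
  functional of the combined estimator splits over the samples.\<close>
lemma quadratic_form_cov_combined_estimator:
  assumes pop: "\<forall>k<N. population (F k)"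
    and T: "\<forall>k<N. admissible_est {..<n k} (\<lambda>_. F k) (T k)"
    and nonempty: "(SIGMA k:{..<N}. {..<n k}) \<noteq> {}"
  shows "w \<bullet> (cov_matrix (sample_law (SIGMA k:{..<N}. {..<n k}) (\<lambda>(k, i). F k) \<theta>)
                (combined_estimator N n A T) *v w)
       = (\<Sum>k<N. (w v* A k) \<bullet> (cov_matrix (sample_law {..<n k} (\<lambda>_. F k) \<theta>) (T k) *v (w v* A k)))"
proof -
  let ?I = "SIGMA k:{..<N}. {..<n k}" and ?Fs = "\<lambda>(k, i). F k"
  let ?P = "sample_law ?I ?Fs \<theta>" and ?L = "\<lambda>k. sample_law {..<n k} (\<lambda>_. F k) \<theta>"
  define Y where "Y k \<omega> = (w v* A k) \<bullet> T k (block (n k) k \<omega>)" for k \<omega>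
  interpret prob_space ?P using pop by (intro prob_space_sample_law) auto
  have pop': "\<And>j. j \<in> ?I \<Longrightarrow> population (?Fs j)" using pop by auto
  have block_I: "k < N \<Longrightarrow> {k} \<times> {..<n k} \<subseteq> ?I" for k by auto
  have TB: "k < N \<Longrightarrow> square_integrable ?P (\<lambda>\<omega>. T k (block (n k) k \<omega>))" for k
    using T by (intro square_integrable_block_estimator[OF pop' block_I]) auto
  have T_meas: "k < N \<Longrightarrow> T k \<in> borel_measurable (PiM {..<n k} (\<lambda>_. borel))" for k
    using T by (auto simp: admissible_est_def equivariant_def)
  have "w \<bullet> (cov_matrix ?P (combined_estimator N n A T) *v w)
      = variance (\<lambda>\<omega>. \<Sum>k<N. Y k \<omega>)"
    unfolding combined_estimator_def[abs_def] Y_def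
    by (subst cov_matrix_quadratic_form)
      (auto intro!: square_integrable_sum square_integrable_matrix_vector_mult TB
        simp: inner_sum_right dot_lmul_matrix)
  also have "\<dots> = (\<Sum>k<N. variance (Y k))"
  proof (rule variance_sum_indep)
    show "square_integrable ?P (Y k)" if "k \<in> {..<N}" for k
      unfolding Y_def using that by (intro square_integrable_inner TB) auto
    show "indep_var borel (Y j) borel (Y k)" if "j \<in> {..<N}" "k \<in> {..<N}" "j \<noteq> k" for j k
      unfolding Y_def using that nonempty T_meas
      by (intro indep_var_sample_law_blocks[OF _ pop' block_I block_I, where gj="\<lambda>z. (w v* A j) \<bullet> T j z"
            and gk="\<lambda>z. (w v* A k) \<bullet> T k z", simplified]) auto
  qed auto
  also have "\<dots> = (\<Sum>k<N. (w v* A k) \<bullet> (cov_matrix (?L k) (T k) *v (w v* A k)))"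
  proof (rule sum.cong[OF refl])
    fix k assume "k \<in> {..<N}"
    hence k: "k < N" by simp
    interpret L: prob_space "?L k" using pop k by (intro prob_space_sample_law) auto
    have distr: "distr ?P (PiM {..<n k} (\<lambda>_. borel)) (block (n k) k) = ?L k"
      using distr_sample_law_block[OF pop' block_I[OF k]] by simp
    have "variance (Y k) = L.variance (\<lambda>z. (w v* A k) \<bullet> T k z)"
      unfolding Y_def distr[symmetric]
      by (rule variance_distr[OF measurable_block[OF sets_sample_law block_I[OF k]]])
        (use T_meas[OF k] in measurable)
    also have "\<dots> = (w v* A k) \<bullet> (cov_matrix (?L k) (T k) *v (w v* A k))"
      using T k by (intro L.cov_matrix_quadratic_form[symmetric] admissible_est_square_integrable) auto
    finally show "variance (Y k) = (w v* A k) \<bullet> (cov_matrix (?L k) (T k) *v (w v* A k))" .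
  qed
  finally show ?thesis .
qed

text \<open>With the weights \<open>S\<inverse> V\<^sub>k\<inverse>\<close>, where \<open>S = \<Sum>\<^sub>k V\<^sub>k\<inverse>\<close>, the combined estimator has
  covariance \<open>S\<inverse>\<close>; only its quadratic form at \<open>S\<^sup>T x\<close> is needed.\<close>
lemma quadratic_form_cov_optimal_combination:
  fixes F :: "nat \<Rightarrow> (real^'s) measure" and N :: nat and n :: "nat \<Rightarrow> nat"
    and T :: "nat \<Rightarrow> (nat \<Rightarrow> real^'s) \<Rightarrow> real^'s" and \<theta> :: "real^'s"
  defines "V k \<equiv> cov_matrix (sample_law {..<n k} (\<lambda>_. F k) \<theta>) (T k)"
  defines "S \<equiv> \<Sum>k<N. matrix_inv (V k)"
  assumes pop: "\<forall>k<N. population (F k)"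
    and T: "\<forall>k<N. admissible_est {..<n k} (\<lambda>_. F k) (T k)"
    and nonempty: "(SIGMA k:{..<N}. {..<n k}) \<noteq> {}"
    and V: "\<forall>k<N. invertible (V k)" and S: "invertible S"
  shows "(x v* S) \<bullet> (cov_matrix (sample_law (SIGMA k:{..<N}. {..<n k}) (\<lambda>(k, i). F k) \<theta>)
            (combined_estimator N n (\<lambda>k. matrix_inv S ** matrix_inv (V k)) T) *v (x v* S))
       = x \<bullet> (S *v x)"
proof -
  have weights: "(x v* S) v* (matrix_inv S ** matrix_inv (V k)) = x v* matrix_inv (V k)" for k
    by (simp add: vector_matrix_mul_assoc matrix_mul_assoc matrix_inv_mult S)
  have "(x v* S) \<bullet> (cov_matrix (sample_law (SIGMA k:{..<N}. {..<n k}) (\<lambda>(k, i). F k) \<theta>)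
            (combined_estimator N n (\<lambda>k. matrix_inv S ** matrix_inv (V k)) T) *v (x v* S))
      = (\<Sum>k<N. (x v* matrix_inv (V k)) \<bullet> (V k *v (x v* matrix_inv (V k))))"
    unfolding quadratic_form_cov_combined_estimator[OF pop T nonempty] V_def[symmetric] weights ..
  also have "\<dots> = x \<bullet> (S *v x)"
    using V by (simp add: quadratic_form_matrix_inv S_def sum_matrix_vector_mult inner_sum_right)
  finally show ?thesis .
qed

theorem mainTheorem12:
  fixes F :: "nat \<Rightarrow> (real^'s) measure"
    and N :: nat and n :: "nat \<Rightarrow> nat"
    and T :: "nat \<Rightarrow> (nat \<Rightarrow> real^'s) \<Rightarrow> real^'s"
    and Tpool :: "(nat \<times> nat \<Rightarrow> real^'s) \<Rightarrow> real^'s"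
    and \<theta> :: "real^'s"
  assumes "N \<ge> 1"
    and "\<forall>k<N. n k \<ge> 1"
    and "\<forall>k<N. population (F k)"
    and "\<forall>k<N. pitman {..<n k} (\<lambda>_. F k) (T k)"
    and "pitman (SIGMA k:{..<N}. {..<n k}) (\<lambda>(k, i). F k) Tpool"
    and "\<forall>k<N. invertible (cov_matrix (sample_law {..<n k} (\<lambda>_. F k) \<theta>) (T k))"
    and "invertible (cov_matrix (sample_law (SIGMA k:{..<N}. {..<n k}) (\<lambda>(k, i). F k) \<theta>) Tpool)"
  shows "loewner_le
           (\<Sum>k<N. matrix_inv (cov_matrix (sample_law {..<n k} (\<lambda>_. F k) \<theta>) (T k)))
           (matrix_inv (cov_matrix (sample_law (SIGMA k:{..<N}. {..<n k}) (\<lambda>(k, i). F k) \<theta>) Tpool))"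
proof -
  let ?I = "SIGMA k:{..<N}. {..<n k}" and ?Fs = "\<lambda>(k, i). F k"
  let ?P = "sample_law ?I ?Fs \<theta>"
  define V where "V k = cov_matrix (sample_law {..<n k} (\<lambda>_. F k) \<theta>) (T k)" for k
  define S where "S = (\<Sum>k<N. matrix_inv (V k))"
  define A where "A k = matrix_inv S ** matrix_inv (V k)" for k
  have T: "\<forall>k<N. admissible_est {..<n k} (\<lambda>_. F k) (T k)"
    using assms(4) by (simp add: pitman_def)
  have V: "transpose (V k) = V k" "nonneg_def (V k)" "invertible (V k)" if "k \<in> {..<N}" for k
    using that assms(3,6) T unfolding V_def
    by (auto simp: cov_matrix_transpose intro!: prob_space.nonneg_def_cov_matrix
        prob_space_sample_law admissible_est_square_integrable)
  have "invertible S"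
    unfolding S_def using \<open>N \<ge> 1\<close> by (intro invertible_sum_matrix_inv[where i=0] V) auto
  hence "(\<Sum>k<N. A k) = mat 1"
    by (simp add: A_def S_def flip: matrix_mul_sum_right) (simp add: matrix_inv_mult)
  hence le: "loewner_le (cov_matrix ?P Tpool) (cov_matrix ?P (combined_estimator N n A T))"
    using assms(5) admissible_combined_estimator[OF assms(3) T] unfolding pitman_def by blast
  have "(0, 0) \<in> ?I" using assms(1,2) by auto
  hence "(x v* S) \<bullet> (cov_matrix ?P (combined_estimator N n A T) *v (x v* S)) = x \<bullet> (S *v x)" for x
    using \<open>invertible S\<close> V unfolding A_def S_def V_def
    by (intro quadratic_form_cov_optimal_combination assms(3) T) auto
  hence "(x v* S) \<bullet> (cov_matrix ?P Tpool *v (x v* S)) \<le> x \<bullet> (S *v x)" for x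
    using le[unfolded loewner_le_def nonneg_def_def, THEN spec[of _ "x v* S"]]
    by (simp add: matrix_vector_mult_diff_rdistrib inner_diff_right)
  moreover have "square_integrable ?P Tpool"
    using assms(5) by (intro admissible_est_square_integrable) (simp add: pitman_def)
  ultimately show ?thesis using assms(3,7) unfolding S_def V_def
    by (intro loewner_le_matrix_inv cov_matrix_transpose prob_space.nonneg_def_cov_matrix
        prob_space_sample_law) auto
qed

end
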